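(* Suppose $\alpha(n)$ is a log-polynomial sequence of degree $m\ge2$ with data $\{A(n),\kappa,\delta(n)\}$. Then $\alpha$ is Hermite-Jensen of degree $d$ with the same data $\{A(n),\kappa,\delta(n)\}$ for every $d$ with $1\le d\le m+1$.
   Context: Jensen polynomials: $J_\alpha^{d,n}(X)=\sum_{j=0}^d\binom{d}{j}\alpha(n+j)X^j$ and $K_\alpha^{d,n}(X)=X^dJ_\alpha^{d,n}(1/X)=\sum_{j=0}^d\binom dj\alpha(n+j)X^{d-j}$. Limits of polynomials of bounded degree are coefficientwise. $H_d$ is the (physicists') Hermite polynomial, defined by $e^{2Xt-t^2}=\sum_{d\ge0}H_d(X)t^d/d!$. Equivalently, $$H_d(X/2)=\sum_{k}\frac{d!}{(d-k)!}\binom{d-k}{k}(-1)^kX^{d-2k},\qquad i^{-d}H_d(iX/2)=\sum_k\frac{d!}{(d-k)!}\binom{d-k}{k}X^{d-2k}.$$ Log-polynomial: let $m\ge2$ be an integer and $\kappa\in\{1,-1\}$. A sequence of positive reals $\alpha(n)$ is log-polynomial of degree $m$ with data $\{A(n),\kappa,\delta(n)\}$ if there are real sequences $A(n),\delta(n),g_k(n)$ ($3\le k\le m$) such that $$\log\left(\frac{\alpha(n+j)}{\alpha(n)}\right)=A(n)j+\kappa\delta(n)^2j^2+\sum_{k=3}^m g_k(n)j^k+o(\delta(n)^{m+1})\quad(n\to\infty)$$ for $j=1,\dots,m+1$. In addition, $\delta(n)>0$, $\delta(n)\to0$ and $g_k(n)=o(\delta(n)^k)$. Hermite-Jensen: a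 sequence of positive reals $\alpha(n)$ is Hermite-Jensen of degree $d\ge1$ with data $\{A(n),\kappa,\delta(n)\}$ (where $\kappa=\pm1$ and $\delta(n)>0$) if, as $n\to\infty$, both $$\frac{\delta(n)^{-d}}{\alpha(n)}J_\alpha^{d,n}\!\left(\frac{\delta(n)X-1}{e^{A(n)}}\right)\quad\text{and}\quad\frac{(e^{A(n)}\delta(n))^{-d}}{\alpha(n)}K_\alpha^{d,n}\!\left(e^{A(n)}(\delta(n)X-1)\right)$$ converge coefficientwise to $H_d(X/2)$ if $\kappa=-1$, and to $i^{-d}H_d(iX/2)$ if $\kappa=1$. *)

theory Defs
  imports "HOL-Analysis.Analysis" "HOL-Computational_Algebra.Polynomial" "HOL-Library.Landau_Symbols"
begin

definition jensenJ :: "(nat \<Rightarrow> real) \<Rightarrow> nat \<Rightarrow> nat \<Rightarrow> real poly" where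
  "jensenJ \<alpha> d n = (\<Sum>j\<le>d. monom (real (d choose j) * \<alpha> (n + j)) j)"

definition jensenK :: "(nat \<Rightarrow> real) \<Rightarrow> nat \<Rightarrow> nat \<Rightarrow> real poly" where
  "jensenK \<alpha> d n = (\<Sum>j\<le>d. monom (real (d choose j) * \<alpha> (n + j)) (d - j))"

definition hermite :: "nat \<Rightarrow> real poly" where
  "hermite d = (\<Sum>k\<le>d div 2.
      monom ((-1) ^ k * fact d / (fact k * fact (d - 2 * k)) * 2 ^ (d - 2 * k)) (d - 2 * k))"

definition hermite_target :: "real \<Rightarrow> nat \<Rightarrow> complex poly" where
  "hermite_target \<kappa> d =
     (if \<kappa> = -1
      then (map_poly of_real (pcompose (hermite d) [:0, 1/2:]) :: complex poly)
      else smult (inverse (\<i> ^ d))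
             (pcompose (map_poly of_real (hermite d) :: complex poly) [:0, \<i> / 2:]))"

definition poly_coeff_tendsto :: "(nat \<Rightarrow> 'a::real_normed_vector poly) \<Rightarrow> 'a poly \<Rightarrow> bool" where
  "poly_coeff_tendsto P Q \<longleftrightarrow> (\<forall>i. (\<lambda>n. coeff (P n) i) \<longlonglongrightarrow> coeff Q i)"

definition log_polynomial ::
  "(nat \<Rightarrow> real) \<Rightarrow> nat \<Rightarrow> (nat \<Rightarrow> real) \<Rightarrow> real \<Rightarrow> (nat \<Rightarrow> real) \<Rightarrow> bool" where
  "log_polynomial \<alpha> m A \<kappa> \<delta> \<longleftrightarrow>
     m \<ge> 2 \<and> (\<kappa> = 1 \<or> \<kappa> = -1) \<and> (\<forall>n. \<alpha> n > 0) \<and>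
     (\<forall>n. \<delta> n > 0) \<and> \<delta> \<longlonglongrightarrow> 0 \<and>
     (\<exists>g :: nat \<Rightarrow> nat \<Rightarrow> real.
        (\<forall>k\<in>{3..m}. g k \<in> o[sequentially](\<lambda>n. \<delta> n ^ k)) \<and>
        (\<forall>j\<in>{1..m+1}.
           (\<lambda>n. ln (\<alpha> (n + j) / \<alpha> n)
                 - (A n * real j + \<kappa> * \<delta> n ^ 2 * real j ^ 2
                    + (\<Sum>k=3..m. g k n * real j ^ k)))
           \<in> o[sequentially](\<lambda>n. \<delta> n ^ (m + 1))))"

definition hermite_jensen ::
  "(nat \<Rightarrow> real) \<Rightarrow> nat \<Rightarrow> (nat \<Rightarrow> real) \<Rightarrow> real \<Rightarrow> (nat \<Rightarrow> real) \<Rightarrow> bool" where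
  "hermite_jensen \<alpha> d A \<kappa> \<delta> \<longleftrightarrow>
     d \<ge> 1 \<and> (\<kappa> = 1 \<or> \<kappa> = -1) \<and> (\<forall>n. \<alpha> n > 0) \<and> (\<forall>n. \<delta> n > 0) \<and>
     poly_coeff_tendsto
       (\<lambda>n. map_poly complex_of_real
          (smult (inverse (\<delta> n ^ d)) (smult (inverse (\<alpha> n))
             (pcompose (jensenJ \<alpha> d n) [:- 1 / exp (A n), \<delta> n / exp (A n):]))))
       (hermite_target \<kappa> d) \<and>
     poly_coeff_tendsto
       (\<lambda>n. map_poly complex_of_real
          (smult (inverse ((exp (A n) * \<delta> n) ^ d)) (smult (inverse (\<alpha> n))
             (pcompose (jensenK \<alpha> d n) [:- exp (A n), exp (A n) * \<delta> n:]))))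
       (hermite_target \<kappa> d)"

end

theory Submission
  imports Defs
begin

(*
  Substituting X = (\<delta> Y - 1) / exp A into J, the coefficient of Y^i of the normalized Jensen
  polynomial is, up to the factor (d choose i) and a sign, the (d - i)-th forward difference of
  the normalized shifts E n j = \<alpha> (n + j) / (\<alpha> n * exp (A n * j)), divided by \<delta>^(d - i);
  the same holds for K. The log-polynomial hypothesis says that ln (E n j) = p n (\<delta> j) +
  o(\<delta>^(m + 1)) for j \<le> m + 1, where p n tends to \<kappa> X^2 coefficientwise. Exponentiating and
  truncating the exponential series, E n j agrees up to o(\<delta>^(m + 1)) with q n (\<delta> j) for
  polynomials q n tending to exp (\<kappa> X^2) in all degrees \<le> m + 1. An r-th forward difference
  annihilates polynomials of degree below r and sends the r-th power to r!, so the rescaled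
  differences converge to r! times the coefficient of X^r in exp (\<kappa> X^2), and these limits are
  exactly the coefficients of the Hermite polynomial.
*)

section \<open>Forward differences\<close>

definition forward_diff :: "nat \<Rightarrow> (nat \<Rightarrow> 'a::comm_ring_1) \<Rightarrow> 'a" where
  "forward_diff r f = (\<Sum>l\<le>r. of_nat (r choose l) * (-1) ^ (r - l) * f l)"

lemma forward_diff_Suc: "forward_diff (Suc r) f = forward_diff r (\<lambda>l. f (Suc l) - f l)"
proof -
  have shifted: "forward_diff (Suc r) f = (-1) ^ Suc r * f 0 +
      (\<Sum>l\<le>r. of_nat (r choose l) * (-1) ^ (r - l) * f (Suc l)) +
      (\<Sum>l<r. of_nat (r choose Suc l) * (-1) ^ (r - l) * f (Suc l))"
    unfolding forward_diff_def
    by (subst sum.atMost_Suc_shift)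
       (simp add: sum.distrib algebra_simps lessThan_Suc_atMost[symmetric] binomial_eq_0)
  have unshifted: "(\<Sum>l\<le>r. of_nat (r choose l) * (-1) ^ (r - l) * f l) =
      (-1) ^ r * f 0 - (\<Sum>l<r. of_nat (r choose Suc l) * (-1) ^ (r - l) * f (Suc l))"
  proof (cases r)
    case (Suc r')
    have "(-1) ^ (r' - l) = - ((-1) ^ (Suc r' - l) :: 'a)" if "l \<le> r'" for l
      using that by (simp add: Suc_diff_le)
    then show ?thesis unfolding Suc
      by (subst sum.atMost_Suc_shift) (simp add: lessThan_Suc_atMost sum_negf)
  qed simp
  have "forward_diff r (\<lambda>l. f (Suc l) - f l) =
      (\<Sum>l\<le>r. of_nat (r choose l) * (-1) ^ (r - l) * f (Suc l)) -
      (\<Sum>l\<le>r. of_nat (r choose l) * (-1) ^ (r - l) * f l)"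
    unfolding forward_diff_def by (simp add: right_diff_distrib sum_subtractf)
  then show ?thesis
    unfolding shifted unshifted by simp
qed

lemma forward_diff_add: "forward_diff r (\<lambda>l. f l + g l) = forward_diff r f + forward_diff r g"
  unfolding forward_diff_def by (simp add: sum.distrib algebra_simps)

lemma forward_diff_cmult: "forward_diff r (\<lambda>l. c * f l) = c * forward_diff r f"
  unfolding forward_diff_def by (simp add: sum_distrib_left mult_ac)

lemma forward_diff_sum:
  "finite A \<Longrightarrow> forward_diff r (\<lambda>l. \<Sum>a\<in>A. F a l) = (\<Sum>a\<in>A. forward_diff r (F a))"
  unfolding forward_diff_def sum_distrib_left by (subst sum.swap) (simp add: mult.assoc)

lemma forward_diff_power:
  fixes x :: "'a::{comm_ring_1, ring_char_0}"
  assumes "s \<le> r"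
  shows "forward_diff r (\<lambda>l. (x + of_nat l) ^ s) = (if s = r then fact r else 0)"
  using assms
proof (induction r arbitrary: s)
  case 0
  then show ?case by (simp add: forward_diff_def)
next
  case (Suc r)
  have step: "(x + of_nat (Suc l)) ^ s - (x + of_nat l) ^ s
      = (\<Sum>a<s. of_nat (s choose a) * (x + of_nat l) ^ a)" for l
  proof -
    have "(x + of_nat (Suc l)) ^ s = (\<Sum>a\<le>s. of_nat (s choose a) * (x + of_nat l) ^ a)"
      using binomial_ring[of "x + of_nat l" 1 s] by (simp add: algebra_simps)
    then show ?thesis by (simp add: lessThan_Suc_atMost[symmetric])
  qed
  have "forward_diff (Suc r) (\<lambda>l. (x + of_nat l) ^ s)
      = (\<Sum>a<s. of_nat (s choose a) * forward_diff r (\<lambda>l. (x + of_nat l) ^ a))"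
    unfolding forward_diff_Suc step by (simp add: forward_diff_sum forward_diff_cmult)
  also have "\<dots> = (\<Sum>a<s. of_nat (s choose a) * (if a = r then fact r else 0))"
    using Suc by (intro sum.cong) auto
  also have "\<dots> = (if s = Suc r then fact (Suc r) else 0)"
    using Suc.prems by (auto simp: if_distrib sum.delta' not_less_eq)
  finally show ?case .
qed

section \<open>Coefficients of the normalized Jensen polynomials\<close>

lemma pcompose_monom: "pcompose (monom c j) q = smult c (q ^ j)"
  by (simp add: pcompose_altdef map_poly_monom poly_monom)

lemma coeff_linear_poly_power_if:
  fixes u v :: "'a::comm_semiring_1"
  shows "coeff ([:u, v:] ^ j) i = (if i \<le> j then of_nat (j choose i) * v ^ i * u ^ (j - i) else 0)"
proof (cases "i \<le> j")
  case False
  have "degree ([:u, v:] ^ j) \<le> 1 * j"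
    by (rule order.trans[OF degree_power_le]) simp
  with False show ?thesis
    by (simp add: coeff_eq_0)
qed (simp add: coeff_linear_poly_power)

lemma coeff_binomial_poly_pcompose_linear:
  fixes c :: "nat \<Rightarrow> 'a::comm_ring_1"
  shows "coeff (pcompose (\<Sum>j\<le>d. monom (of_nat (d choose j) * c j) j) [:u, v:]) i
    = (if i \<le> d then of_nat (d choose i) * v ^ i *
        (\<Sum>l\<le>d - i. of_nat ((d - i) choose l) * u ^ l * c (i + l)) else 0)"
proof -
  have coeff_sum_if: "coeff (pcompose (\<Sum>j\<le>d. monom (of_nat (d choose j) * c j) j) [:u, v:]) i
      = (\<Sum>j\<le>d. of_nat (d choose j) * c j *
          (if i \<le> j then of_nat (j choose i) * v ^ i * u ^ (j - i) else 0))"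
    unfolding pcompose_sum pcompose_monom coeff_sum coeff_smult coeff_linear_poly_power_if ..
  show ?thesis
  proof (cases "i \<le> d")
    case True
    have "(\<Sum>j\<le>d. of_nat (d choose j) * c j *
          (if i \<le> j then of_nat (j choose i) * v ^ i * u ^ (j - i) else 0))
        = (\<Sum>j\<in>{i..d}. of_nat (d choose j) * c j * (of_nat (j choose i) * v ^ i * u ^ (j - i)))"
      by (intro sum.mono_neutral_cong_right) auto
    also have "\<dots> = (\<Sum>l\<le>d - i. of_nat (d choose (i + l)) * c (i + l) *
        (of_nat ((i + l) choose i) * v ^ i * u ^ l))"
      using True
      by (intro sum.reindex_bij_witness[where i="\<lambda>l. i + l" and j="\<lambda>j. j - i"]) auto
    also have "\<dots> = (\<Sum>l\<le>d - i. of_nat (d choose i) * v ^ i * (of_nat ((d - i) choose l) * u ^ l * c (i + l)))"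
    proof (intro sum.cong refl)
      fix l assume "l \<in> {..d - i}"
      then have "(d choose (i + l)) * ((i + l) choose i) = (d choose i) * ((d - i) choose l)"
        using choose_mult[of i "i + l" d] True by simp
      then have "of_nat (d choose (i + l)) * of_nat ((i + l) choose i)
          = (of_nat (d choose i) * of_nat ((d - i) choose l) :: 'a)"
        by (metis of_nat_mult)
      then show "of_nat (d choose (i + l)) * c (i + l) * (of_nat ((i + l) choose i) * v ^ i * u ^ l)
          = of_nat (d choose i) * v ^ i * (of_nat ((d - i) choose l) * u ^ l * c (i + l))"
        by (simp add: algebra_simps)
    qed
    finally show ?thesis
      using True unfolding coeff_sum_if by (simp add: sum_distrib_left)
  qed (simp add: coeff_sum_if)
qed

lemma sum_choose_reflect:
  fixes f :: "nat \<Rightarrow> 'a::comm_semiring_1"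
  shows "(\<Sum>l\<le>r. of_nat (r choose l) * f l) = (\<Sum>l\<le>r. of_nat (r choose l) * f (r - l))"
proof -
  have reflect: "(\<Sum>l\<le>r. g l) = (\<Sum>l\<le>r. g (r - l))" for g :: "nat \<Rightarrow> 'a"
    by (metis atLeast0AtMost add_0_right sum.atLeastAtMost_rev)
  have "(\<Sum>l\<le>r. of_nat (r choose l) * f l) = (\<Sum>l\<le>r. of_nat (r choose (r - l)) * f (r - l))"
    by (rule reflect)
  also have "\<dots> = (\<Sum>l\<le>r. of_nat (r choose l) * f (r - l))"
    by (intro sum.cong refl) (simp only: atMost_iff binomial_symmetric[symmetric])
  finally show ?thesis .
qed

lemma jensenK_altdef: "jensenK \<alpha> d n = (\<Sum>j\<le>d. monom (real (d choose j) * \<alpha> (n + (d - j))) j)"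
  unfolding jensenK_def
  by (rule sum.reindex_bij_witness[where i="\<lambda>j. d - j" and j="\<lambda>j. d - j"])
     (auto simp: binomial_symmetric[symmetric])

definition normalized_shift :: "(nat \<Rightarrow> real) \<Rightarrow> (nat \<Rightarrow> real) \<Rightarrow> nat \<Rightarrow> nat \<Rightarrow> real" where
  "normalized_shift \<alpha> A n j = \<alpha> (n + j) / (\<alpha> n * exp (A n * real j))"

lemma exp_mult_of_nat: "exp (x * real k) = exp x ^ k"
  by (simp add: exp_of_nat_mult[symmetric] mult.commute)

lemma coeff_normalized_jensenJ:
  fixes \<alpha> A \<delta> :: "nat \<Rightarrow> real"
  assumes \<alpha>_pos: "\<alpha> n > 0" and \<delta>_pos: "\<delta> n > 0"
  shows "coeff (smult (inverse (\<delta> n ^ d)) (smult (inverse (\<alpha> n))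
             (pcompose (jensenJ \<alpha> d n) [:- 1 / exp (A n), \<delta> n / exp (A n):]))) i
    = (if i \<le> d then real (d choose i) * (-1) ^ (d - i) *
        (forward_diff (d - i) (\<lambda>l. normalized_shift \<alpha> A n (i + l)) / \<delta> n ^ (d - i)) else 0)"
proof (cases "i \<le> d")
  case True
  define r where "r = d - i"
  define e where "e = exp (A n)"
  have "e > 0"
    unfolding e_def by simp
  have summand: "inverse (\<delta> n ^ d) * (inverse (\<alpha> n) * ((\<delta> n / e) ^ i * ((- 1 / e) ^ l * \<alpha> (n + (i + l)))))
      = (-1) ^ r * ((-1) ^ (r - l) * normalized_shift \<alpha> A n (i + l)) / \<delta> n ^ r" if "l \<le> r" for l
  proof -
    have "r + (r - l) = l + 2 * (r - l)"
      using that by simp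
    then have "(-1::real) ^ r * (-1) ^ (r - l) = (-1) ^ (l + 2 * (r - l))"
      by (metis power_add)
    then have "(-1::real) ^ r * (-1) ^ (r - l) = (-1) ^ l"
      by (simp add: power_add power_mult)
    then have "(- 1 / e) ^ l = (-1) ^ r * (-1) ^ (r - l) / e ^ l"
      by (simp add: power_minus' power_one_over divide_inverse power_inverse)
    moreover have "\<delta> n ^ d = \<delta> n ^ i * \<delta> n ^ r"
      using True unfolding r_def by (simp flip: power_add)
    ultimately show ?thesis
      unfolding normalized_shift_def exp_mult_of_nat e_def[symmetric]
      using \<alpha>_pos \<delta>_pos \<open>e > 0\<close> by (simp add: field_simps power_add)
  qed
  have "coeff (smult (inverse (\<delta> n ^ d)) (smult (inverse (\<alpha> n))
             (pcompose (jensenJ \<alpha> d n) [:- 1 / exp (A n), \<delta> n / exp (A n):]))) i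
      = (\<Sum>l\<le>r. real (d choose i) * real (r choose l) * (inverse (\<delta> n ^ d) *
          (inverse (\<alpha> n) * ((\<delta> n / e) ^ i * ((- 1 / e) ^ l * \<alpha> (n + (i + l)))))))"
    unfolding jensenJ_def coeff_smult coeff_binomial_poly_pcompose_linear e_def[symmetric] r_def[symmetric]
    using True by (simp add: sum_distrib_left mult_ac)
  also have "\<dots> = (\<Sum>l\<le>r. real (d choose i) * real (r choose l) *
      ((-1) ^ r * ((-1) ^ (r - l) * normalized_shift \<alpha> A n (i + l)) / \<delta> n ^ r))"
    by (intro sum.cong refl) (simp only: atMost_iff summand)
  also have "\<dots> = real (d choose i) * (-1) ^ r *
      (forward_diff r (\<lambda>l. normalized_shift \<alpha> A n (i + l)) / \<delta> n ^ r)"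
    unfolding forward_diff_def by (simp add: sum_distrib_left sum_divide_distrib mult_ac)
  finally show ?thesis
    using True unfolding r_def by simp
next
  case False
  then show ?thesis
    unfolding jensenJ_def coeff_smult coeff_binomial_poly_pcompose_linear by simp
qed

lemma coeff_normalized_jensenK:
  fixes \<alpha> A \<delta> :: "nat \<Rightarrow> real"
  assumes \<alpha>_pos: "\<alpha> n > 0" and \<delta>_pos: "\<delta> n > 0"
  shows "coeff (smult (inverse ((exp (A n) * \<delta> n) ^ d)) (smult (inverse (\<alpha> n))
             (pcompose (jensenK \<alpha> d n) [:- exp (A n), exp (A n) * \<delta> n:]))) i
    = (if i \<le> d then real (d choose i) *
        (forward_diff (d - i) (normalized_shift \<alpha> A n) / \<delta> n ^ (d - i)) else 0)"
proof (cases "i \<le> d")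
  case True
  define r where "r = d - i"
  define e where "e = exp (A n)"
  have "e > 0"
    unfolding e_def by simp
  have reversed: "(\<Sum>l\<le>r. real (r choose l) * (- e) ^ l * \<alpha> (n + (d - (i + l))))
      = (\<Sum>l\<le>r. real (r choose l) * (- e) ^ (r - l) * \<alpha> (n + l))"
  proof -
    have "(\<Sum>l\<le>r. real (r choose l) * (- e) ^ l * \<alpha> (n + (d - (i + l))))
        = (\<Sum>l\<le>r. real (r choose l) * ((- e) ^ l * \<alpha> (n + (r - l))))"
      using True unfolding r_def by (intro sum.cong) (auto simp: mult.assoc)
    also have "\<dots> = (\<Sum>l\<le>r. real (r choose l) * ((- e) ^ (r - l) * \<alpha> (n + l)))"
      by (subst sum_choose_reflect) (intro sum.cong, auto)
    finally show ?thesis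
      by (simp add: mult.assoc)
  qed
  have summand: "inverse ((e * \<delta> n) ^ d) * (inverse (\<alpha> n) * ((e * \<delta> n) ^ i * ((- e) ^ (r - l) * \<alpha> (n + l))))
      = (-1) ^ (r - l) * normalized_shift \<alpha> A n l / \<delta> n ^ r" if "l \<le> r" for l
  proof -
    have "(e * \<delta> n) ^ d = (e ^ i * \<delta> n ^ i) * (e ^ (r - l) * e ^ l * \<delta> n ^ r)"
      using True that unfolding r_def by (simp add: power_mult_distrib mult_ac flip: power_add)
    moreover have "(- e) ^ (r - l) = (-1) ^ (r - l) * e ^ (r - l)"
      by (rule power_minus)
    ultimately show ?thesis
      unfolding normalized_shift_def exp_mult_of_nat e_def[symmetric]
      using \<alpha>_pos \<delta>_pos \<open>e > 0\<close> by (simp add: field_simps)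
  qed
  have "coeff (smult (inverse ((exp (A n) * \<delta> n) ^ d)) (smult (inverse (\<alpha> n))
             (pcompose (jensenK \<alpha> d n) [:- exp (A n), exp (A n) * \<delta> n:]))) i
      = (\<Sum>l\<le>r. real (d choose i) * real (r choose l) * (inverse ((e * \<delta> n) ^ d) *
          (inverse (\<alpha> n) * ((e * \<delta> n) ^ i * ((- e) ^ (r - l) * \<alpha> (n + l))))))"
    unfolding jensenK_altdef coeff_smult coeff_binomial_poly_pcompose_linear e_def[symmetric]
      r_def[symmetric] reversed
    using True by (simp add: sum_distrib_left mult_ac)
  also have "\<dots> = (\<Sum>l\<le>r. real (d choose i) * real (r choose l) *
      ((-1) ^ (r - l) * normalized_shift \<alpha> A n l / \<delta> n ^ r))"
    by (intro sum.cong refl) (simp only: atMost_iff summand)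
  also have "\<dots> = real (d choose i) * (forward_diff r (normalized_shift \<alpha> A n) / \<delta> n ^ r)"
    unfolding forward_diff_def by (simp add: sum_distrib_left sum_divide_distrib mult_ac)
  finally show ?thesis
    using True unfolding r_def by simp
next
  case False
  then show ?thesis
    unfolding jensenK_altdef coeff_smult coeff_binomial_poly_pcompose_linear by simp
qed

section \<open>Coefficients of the Hermite limit\<close>

definition exp_taylor_poly :: "nat \<Rightarrow> real poly \<Rightarrow> real poly" where
  "exp_taylor_poly T p = (\<Sum>t<T. smult (1 / fact t) (p ^ t))"

lemma poly_exp_taylor_poly: "poly (exp_taylor_poly T p) x = (\<Sum>t<T. poly p x ^ t / fact t)"
  unfolding exp_taylor_poly_def by (simp add: poly_sum)

lemma degree_exp_taylor_poly:
  assumes "degree p \<le> m"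
  shows "degree (exp_taylor_poly T p) \<le> m * T"
  unfolding exp_taylor_poly_def
proof (intro degree_sum_le)
  fix t assume "t \<in> {..<T}"
  have "degree (p ^ t) \<le> degree p * t"
    by (rule degree_power_le)
  also have "\<dots> \<le> m * T"
    using assms \<open>t \<in> {..<T}\<close> by (intro mult_mono) auto
  finally show "degree (smult (1 / fact t) (p ^ t)) \<le> m * T"
    by (rule order.trans[OF degree_smult_le])
qed simp

text \<open>The coefficient of \<open>X\<^sup>r\<close> in the power series \<open>exp (\<kappa> X\<^sup>2)\<close>.\<close>
definition exp_sq_coeff :: "real \<Rightarrow> nat \<Rightarrow> real" where
  "exp_sq_coeff \<kappa> r = (if even r then \<kappa> ^ (r div 2) / fact (r div 2) else 0)"

lemma coeff_exp_taylor_poly_sq: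
  assumes "r < 2 * T"
  shows "coeff (exp_taylor_poly T [:0, 0, \<kappa>:]) r = exp_sq_coeff \<kappa> r"
proof -
  have sq: "[:0, 0, \<kappa>:] = monom \<kappa> 2"
    by (simp add: monom_altdef power2_eq_square)
  have "coeff (exp_taylor_poly T [:0, 0, \<kappa>:]) r
      = (\<Sum>t<T. if t = r div 2 \<and> even r then \<kappa> ^ t / fact t else 0)"
    unfolding exp_taylor_poly_def sq coeff_sum monom_power coeff_smult coeff_monom by (intro sum.cong) auto
  also have "\<dots> = exp_sq_coeff \<kappa> r"
    using assms unfolding exp_sq_coeff_def by (auto simp: sum.delta')
  finally show ?thesis .
qed

lemma coeff_hermite:
  "coeff (hermite d) i = (if i \<le> d \<and> even (d - i)
     then (-1) ^ ((d - i) div 2) * fact d / (fact ((d - i) div 2) * fact i) * 2 ^ i else 0)"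
proof -
  have index: "(d - 2 * k = i) \<longleftrightarrow> (k = (d - i) div 2 \<and> i \<le> d \<and> even (d - i))"
    if "k \<le> d div 2" for k
  proof -
    have "2 * k \<le> d"
      using that by linarith
    then show ?thesis
      by (auto simp del: even_diff_nat)
  qed
  have "coeff (hermite d) i = (\<Sum>k\<le>d div 2. if k = (d - i) div 2 \<and> i \<le> d \<and> even (d - i)
      then (-1) ^ ((d - i) div 2) * fact d / (fact ((d - i) div 2) * fact i) * 2 ^ i else 0)"
    unfolding hermite_def coeff_sum coeff_monom
    by (intro sum.cong refl) (auto simp: index simp del: even_diff_nat)
  also have "\<dots> = (if i \<le> d \<and> even (d - i)
      then (-1) ^ ((d - i) div 2) * fact d / (fact ((d - i) div 2) * fact i) * 2 ^ i else 0)"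
    by (auto simp: div_le_mono simp del: even_diff_nat)
  finally show ?thesis .
qed

definition hermite_target_coeff :: "real \<Rightarrow> nat \<Rightarrow> nat \<Rightarrow> real" where
  "hermite_target_coeff \<kappa> d i =
     (if i \<le> d then real (d choose i) * fact (d - i) * exp_sq_coeff \<kappa> (d - i) else 0)"

lemma hermite_target_coeff_altdef:
  "hermite_target_coeff \<kappa> d i = (if i \<le> d \<and> even (d - i)
     then \<kappa> ^ ((d - i) div 2) * fact d / (fact ((d - i) div 2) * fact i) else 0)"
proof (cases "i \<le> d")
  case True
  then have "real (d choose i) * fact (d - i) = fact d / fact i"
    by (simp add: binomial_fact field_simps)
  with True show ?thesis
    unfolding hermite_target_coeff_def exp_sq_coeff_def by (auto simp: field_simps)
qed (simp add: hermite_target_coeff_def)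

lemma pCons_0_eq_monom_1: "[:0, c:] = monom c 1"
  by (simp add: monom_Suc monom_0)

lemma coeff_hermite_target:
  assumes "\<kappa> = 1 \<or> \<kappa> = -1"
  shows "coeff (hermite_target \<kappa> d) i = complex_of_real (hermite_target_coeff \<kappa> d i)"
proof (cases "\<kappa> = -1")
  case True
  have "coeff (hermite_target \<kappa> d) i = complex_of_real ((1 / 2) ^ i * coeff (hermite d) i)"
    unfolding hermite_target_def True by (simp add: coeff_map_poly pCons_0_eq_monom_1)
  also have "(1 / 2) ^ i * coeff (hermite d) i = hermite_target_coeff \<kappa> d i"
    unfolding coeff_hermite hermite_target_coeff_altdef True
    by (simp add: field_simps del: even_diff_nat)
  finally show ?thesis .
next
  case False
  with assms have "\<kappa> = 1"
    by simp
  have "coeff (hermite_target \<kappa> d) i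
      = inverse (\<i> ^ d) * ((\<i> / 2) ^ i * complex_of_real (coeff (hermite d) i))"
    unfolding hermite_target_def \<open>\<kappa> = 1\<close> by (simp add: coeff_map_poly pCons_0_eq_monom_1)
  also have "\<dots> = complex_of_real (hermite_target_coeff \<kappa> d i)"
  proof (cases "i \<le> d \<and> even (d - i)")
    case True
    define k where "k = (d - i) div 2"
    have "d = i + 2 * k"
      unfolding k_def using True by auto
    then have i_pow: "\<i> ^ d = \<i> ^ i * (-1) ^ k"
      by (simp add: power_add power_mult)
    have hermite: "complex_of_real (coeff (hermite d) i) = (-1) ^ k * fact d / (fact k * fact i) * 2 ^ i"
      unfolding coeff_hermite k_def[symmetric] using True by (simp del: even_diff_nat)
    have "inverse (\<i> ^ d) * ((\<i> / 2) ^ i * complex_of_real (coeff (hermite d) i))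
        = (\<i> ^ i / \<i> ^ i) * ((-1) ^ k * (-1) ^ k) * (2 ^ i / 2 ^ i) * (fact d / (fact k * fact i))"
      unfolding i_pow hermite by (simp add: power_divide field_simps)
    also have "\<dots> = fact d / (fact k * fact i)"
      by (simp flip: power_add)
    also have "\<dots> = complex_of_real (hermite_target_coeff \<kappa> d i)"
      unfolding hermite_target_coeff_altdef k_def[symmetric] \<open>\<kappa> = 1\<close> using True
      by (simp del: even_diff_nat)
    finally show ?thesis .
  next
    case False
    then show ?thesis
      unfolding coeff_hermite hermite_target_coeff_altdef by (simp only: if_not_P) simp
  qed
  finally show ?thesis .
qed

section \<open>Coefficientwise convergence and asymptotic estimates\<close>

lemma poly_coeff_tendsto_const: "poly_coeff_tendsto (\<lambda>n. Q) Q"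
  unfolding poly_coeff_tendsto_def by simp

lemma poly_coeff_tendsto_add:
  "poly_coeff_tendsto P Q \<Longrightarrow> poly_coeff_tendsto P' Q' \<Longrightarrow>
   poly_coeff_tendsto (\<lambda>n. P n + P' n) (Q + Q')"
  unfolding poly_coeff_tendsto_def by (auto intro: tendsto_add)

lemma poly_coeff_tendsto_sum:
  "(\<And>t. t \<in> A \<Longrightarrow> poly_coeff_tendsto (P t) (Q t)) \<Longrightarrow>
   poly_coeff_tendsto (\<lambda>n. \<Sum>t\<in>A. P t n) (\<Sum>t\<in>A. Q t)"
  unfolding poly_coeff_tendsto_def coeff_sum by (auto intro!: tendsto_sum)

lemma poly_coeff_tendsto_smult:
  fixes P :: "nat \<Rightarrow> 'a::real_normed_field poly"
  shows "poly_coeff_tendsto P Q \<Longrightarrow> poly_coeff_tendsto (\<lambda>n. smult c (P n)) (smult c Q)"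
  unfolding poly_coeff_tendsto_def by (auto intro: tendsto_mult)

lemma poly_coeff_tendsto_mult:
  fixes P :: "nat \<Rightarrow> 'a::real_normed_field poly"
  shows "poly_coeff_tendsto P Q \<Longrightarrow> poly_coeff_tendsto P' Q' \<Longrightarrow>
   poly_coeff_tendsto (\<lambda>n. P n * P' n) (Q * Q')"
  unfolding poly_coeff_tendsto_def coeff_mult by (auto intro!: tendsto_sum tendsto_mult)

lemma poly_coeff_tendsto_power:
  fixes P :: "nat \<Rightarrow> 'a::real_normed_field poly"
  shows "poly_coeff_tendsto P Q \<Longrightarrow> poly_coeff_tendsto (\<lambda>n. P n ^ k) (Q ^ k)"
  by (induction k) (auto intro: poly_coeff_tendsto_mult poly_coeff_tendsto_const)

lemma poly_coeff_tendsto_exp_taylor_poly: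
  "poly_coeff_tendsto p P \<Longrightarrow> poly_coeff_tendsto (\<lambda>n. exp_taylor_poly T (p n)) (exp_taylor_poly T P)"
  unfolding exp_taylor_poly_def
  by (intro poly_coeff_tendsto_sum poly_coeff_tendsto_smult poly_coeff_tendsto_power)

lemma poly_altdef_degree_le:
  fixes p :: "'a::comm_semiring_1 poly"
  assumes "degree p \<le> N"
  shows "poly p x = (\<Sum>i\<le>N. coeff p i * x ^ i)"
  by (subst poly_altdef, rule sum.mono_neutral_left) (use assms in \<open>auto simp: coeff_eq_0\<close>)

lemma tendsto_div_power_imp_tendsto_0:
  fixes y \<delta> :: "nat \<Rightarrow> real"
  assumes "\<delta> \<longlonglongrightarrow> 0" "(\<lambda>n. y n / \<delta> n ^ R) \<longlonglongrightarrow> 0" "\<And>n. \<delta> n > 0"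
  shows "y \<longlonglongrightarrow> 0"
proof -
  have "(\<lambda>n. y n / \<delta> n ^ R * \<delta> n ^ R) \<longlonglongrightarrow> 0 * 0 ^ R"
    by (intro tendsto_intros assms)
  moreover have "y n / \<delta> n ^ R * \<delta> n ^ R = y n" for n
    using assms(3)[of n] by simp
  ultimately show ?thesis by simp
qed

lemma tendsto_exp_taylor_remainder:
  fixes y \<delta> :: "nat \<Rightarrow> real"
  assumes \<delta>_pos: "\<And>n. \<delta> n > 0" and \<delta>_0: "\<delta> \<longlonglongrightarrow> 0"
    and y: "(\<lambda>n. y n / \<delta> n) \<longlonglongrightarrow> 0" and "R < T"
  shows "(\<lambda>n. (exp (y n) - (\<Sum>t<T. y n ^ t / fact t)) / \<delta> n ^ R) \<longlonglongrightarrow> 0"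
proof (rule Lim_null_comparison)
  have y_0: "y \<longlonglongrightarrow> 0"
    using tendsto_div_power_imp_tendsto_0[of \<delta> y 1] assms by simp
  show "\<forall>\<^sub>F n in sequentially. norm ((exp (y n) - (\<Sum>t<T. y n ^ t / fact t)) / \<delta> n ^ R)
        \<le> exp \<bar>y n\<bar> / fact T * \<bar>y n / \<delta> n\<bar> ^ T * \<delta> n ^ (T - R)"
  proof (intro always_eventually allI)
    fix n
    obtain t where t: "\<bar>t\<bar> \<le> \<bar>y n\<bar>"
      "exp (y n) = (\<Sum>m<T. y n ^ m / fact m) + exp t / fact T * y n ^ T"
      using Maclaurin_exp_le by blast
    have split: "\<delta> n ^ T = \<delta> n ^ R * \<delta> n ^ (T - R)"
      using \<open>R < T\<close> by (simp flip: power_add)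
    have "norm ((exp (y n) - (\<Sum>t<T. y n ^ t / fact t)) / \<delta> n ^ R)
        = exp t / fact T * (\<bar>y n\<bar> ^ T / \<delta> n ^ R)"
      using t \<delta>_pos[of n] by (simp add: abs_mult power_abs)
    also have "\<bar>y n\<bar> ^ T / \<delta> n ^ R = \<bar>y n / \<delta> n\<bar> ^ T * \<delta> n ^ (T - R)"
      using \<delta>_pos[of n] by (simp add: power_divide split)
    also have "exp t / fact T * (\<bar>y n / \<delta> n\<bar> ^ T * \<delta> n ^ (T - R))
        \<le> exp \<bar>y n\<bar> / fact T * (\<bar>y n / \<delta> n\<bar> ^ T * \<delta> n ^ (T - R))"
      using t \<delta>_pos[of n] by (intro mult_right_mono divide_right_mono) auto
    finally show "norm ((exp (y n) - (\<Sum>t<T. y n ^ t / fact t)) / \<delta> n ^ R)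
        \<le> exp \<bar>y n\<bar> / fact T * \<bar>y n / \<delta> n\<bar> ^ T * \<delta> n ^ (T - R)"
      by (simp add: mult.assoc)
  qed
  have "(\<lambda>n. exp \<bar>y n\<bar> / fact T * \<bar>y n / \<delta> n\<bar> ^ T * \<delta> n ^ (T - R))
      \<longlonglongrightarrow> exp \<bar>0\<bar> / fact T * \<bar>0\<bar> ^ T * 0 ^ (T - R)"
    by (intro tendsto_intros y y_0 \<delta>_0) simp
  then show "(\<lambda>n. exp \<bar>y n\<bar> / fact T * \<bar>y n / \<delta> n\<bar> ^ T * \<delta> n ^ (T - R)) \<longlonglongrightarrow> 0"
    by (rule tendsto_eq_rhs) (use \<open>R < T\<close> in simp)
qed

lemma tendsto_exp_perturbation:
  fixes P L \<delta> :: "nat \<Rightarrow> real"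
  assumes \<delta>_pos: "\<And>n. \<delta> n > 0" and \<delta>_0: "\<delta> \<longlonglongrightarrow> 0" and P: "P \<longlonglongrightarrow> 0"
    and L: "(\<lambda>n. L n / \<delta> n ^ R) \<longlonglongrightarrow> 0"
  shows "(\<lambda>n. (exp (P n + L n) - exp (P n)) / \<delta> n ^ R) \<longlonglongrightarrow> 0"
proof (rule Lim_null_comparison)
  have L_0: "L \<longlonglongrightarrow> 0"
    using tendsto_div_power_imp_tendsto_0 assms by blast
  show "\<forall>\<^sub>F n in sequentially. norm ((exp (P n + L n) - exp (P n)) / \<delta> n ^ R)
        \<le> exp \<bar>P n\<bar> * exp \<bar>L n\<bar> * \<bar>L n / \<delta> n ^ R\<bar>"
  proof (intro always_eventually allI)
    fix n
    obtain t where t: "\<bar>t\<bar> \<le> \<bar>L n\<bar>" "exp (L n) = (\<Sum>m<1. L n ^ m / fact m) + exp t / fact 1 * L n ^ 1"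
      using Maclaurin_exp_le by blast
    then have "exp (P n + L n) - exp (P n) = exp (P n) * (exp t * L n)"
      by (simp add: exp_add algebra_simps)
    then have "norm ((exp (P n + L n) - exp (P n)) / \<delta> n ^ R) = exp (P n) * (exp t * \<bar>L n / \<delta> n ^ R\<bar>)"
      using \<delta>_pos[of n] by (simp add: abs_mult)
    also have "\<dots> \<le> exp \<bar>P n\<bar> * (exp \<bar>L n\<bar> * \<bar>L n / \<delta> n ^ R\<bar>)"
      using t by (intro mult_mono) auto
    finally show "norm ((exp (P n + L n) - exp (P n)) / \<delta> n ^ R)
        \<le> exp \<bar>P n\<bar> * exp \<bar>L n\<bar> * \<bar>L n / \<delta> n ^ R\<bar>"
      by (simp add: mult.assoc)
  qed
  have "(\<lambda>n. exp \<bar>P n\<bar> * exp \<bar>L n\<bar> * \<bar>L n / \<delta> n ^ R\<bar>) \<longlonglongrightarrow> exp \<bar>0\<bar> * exp \<bar>0\<bar> * \<bar>0\<bar>"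
    by (intro tendsto_intros P L L_0)
  then show "(\<lambda>n. exp \<bar>P n\<bar> * exp \<bar>L n\<bar> * \<bar>L n / \<delta> n ^ R\<bar>) \<longlonglongrightarrow> 0"
    by simp
qed

lemma tendsto_taylor_approx_of_ln_approx:
  fixes E y \<delta> :: "nat \<Rightarrow> real"
  assumes \<delta>_pos: "\<And>n. \<delta> n > 0" and \<delta>_0: "\<delta> \<longlonglongrightarrow> 0" and E_pos: "\<And>n. E n > 0"
    and y: "(\<lambda>n. y n / \<delta> n) \<longlonglongrightarrow> 0" and ln: "(\<lambda>n. (ln (E n) - y n) / \<delta> n ^ R) \<longlonglongrightarrow> 0"
    and "R < T"
  shows "(\<lambda>n. (E n - (\<Sum>t<T. y n ^ t / fact t)) / \<delta> n ^ R) \<longlonglongrightarrow> 0"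
proof -
  have "y \<longlonglongrightarrow> 0"
    using tendsto_div_power_imp_tendsto_0[of \<delta> y 1] assms by simp
  then have "(\<lambda>n. (exp (y n + (ln (E n) - y n)) - exp (y n)) / \<delta> n ^ R
      + (exp (y n) - (\<Sum>t<T. y n ^ t / fact t)) / \<delta> n ^ R) \<longlonglongrightarrow> 0 + 0"
    by (intro tendsto_add tendsto_exp_perturbation tendsto_exp_taylor_remainder assms)
  then show ?thesis
    using E_pos by (simp add: diff_divide_distrib)
qed

lemma tendsto_forward_diff_poly_rescaled:
  fixes \<delta> :: "nat \<Rightarrow> real" and q :: "nat \<Rightarrow> real poly"
  assumes \<delta>_pos: "\<And>n. \<delta> n > 0" and \<delta>_0: "\<delta> \<longlonglongrightarrow> 0"
    and q: "poly_coeff_tendsto q q_lim" and deg: "\<And>n. degree (q n) \<le> N" and "r \<le> N"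
  shows "(\<lambda>n. forward_diff r (\<lambda>l. poly (q n) (\<delta> n * real (a + l))) / \<delta> n ^ r)
    \<longlonglongrightarrow> fact r * coeff q_lim r"
proof -
  define D where "D s = forward_diff r (\<lambda>l. (real a + real l) ^ s)" for s
  have expand: "forward_diff r (\<lambda>l. poly (q n) (\<delta> n * real (a + l))) / \<delta> n ^ r
      = (\<Sum>s\<le>N. coeff (q n) s * (\<delta> n ^ s / \<delta> n ^ r) * D s)" for n
  proof -
    have "poly (q n) (\<delta> n * real (a + l)) = (\<Sum>s\<le>N. coeff (q n) s * \<delta> n ^ s * (real a + real l) ^ s)"
      for l
      unfolding poly_altdef_degree_le[OF deg] by (simp add: power_mult_distrib mult_ac)
    then show ?thesis
      unfolding D_def
      by (simp add: forward_diff_cmult forward_diff_sum sum_divide_distrib mult_ac)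
  qed
  have "(\<lambda>n. coeff (q n) s * (\<delta> n ^ s / \<delta> n ^ r) * D s) \<longlonglongrightarrow> (if s = r then fact r * coeff q_lim r else 0)"
    for s
  proof (cases rule: linorder_cases[of s r])
    case less
    then show ?thesis unfolding D_def by (simp add: forward_diff_power)
  next
    case equal
    have "(\<lambda>n. coeff (q n) r) \<longlonglongrightarrow> coeff q_lim r"
      using q unfolding poly_coeff_tendsto_def by blast
    then show ?thesis
      using equal \<delta>_pos unfolding D_def
      by (simp add: forward_diff_power less_imp_neq[symmetric] tendsto_mult_right mult.commute)
  next
    case greater
    have "\<delta> n ^ s / \<delta> n ^ r = \<delta> n ^ (s - r)" for n
      using greater \<delta>_pos[of n] by (simp add: power_diff)
    moreover have "(\<lambda>n. coeff (q n) s * \<delta> n ^ (s - r) * D s) \<longlonglongrightarrow> coeff q_lim s * 0 ^ (s - r) * D s"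
      using q \<delta>_0 unfolding poly_coeff_tendsto_def by (intro tendsto_intros) auto
    ultimately show ?thesis
      using greater by (simp add: zero_power)
  qed
  then have "(\<lambda>n. \<Sum>s\<le>N. coeff (q n) s * (\<delta> n ^ s / \<delta> n ^ r) * D s)
      \<longlonglongrightarrow> (\<Sum>s\<le>N. if s = r then fact r * coeff q_lim r else 0)"
    by (intro tendsto_sum)
  then show ?thesis
    using \<open>r \<le> N\<close> unfolding expand by simp
qed

lemma tendsto_forward_diff_of_poly_approx:
  fixes E :: "nat \<Rightarrow> nat \<Rightarrow> real" and \<delta> :: "nat \<Rightarrow> real" and q :: "nat \<Rightarrow> real poly"
  assumes \<delta>_pos: "\<And>n. \<delta> n > 0" and \<delta>_0: "\<delta> \<longlonglongrightarrow> 0"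
    and q: "poly_coeff_tendsto q q_lim" and deg: "\<And>n. degree (q n) \<le> N" and "r \<le> N"
    and "a + r \<le> R"
    and approx: "\<And>j. j \<le> R \<Longrightarrow> (\<lambda>n. (E n j - poly (q n) (\<delta> n * real j)) / \<delta> n ^ R) \<longlonglongrightarrow> 0"
  shows "(\<lambda>n. forward_diff r (\<lambda>l. E n (a + l)) / \<delta> n ^ r) \<longlonglongrightarrow> fact r * coeff q_lim r"
proof -
  define X where "X n l = (E n (a + l) - poly (q n) (\<delta> n * real (a + l))) / \<delta> n ^ R" for n l
  have split: "forward_diff r (\<lambda>l. E n (a + l)) / \<delta> n ^ r = forward_diff r (X n) * \<delta> n ^ (R - r)
      + forward_diff r (\<lambda>l. poly (q n) (\<delta> n * real (a + l))) / \<delta> n ^ r" for n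
  proof -
    have "(\<lambda>l. E n (a + l)) = (\<lambda>l. \<delta> n ^ R * X n l + poly (q n) (\<delta> n * real (a + l)))"
      using \<delta>_pos[of n] unfolding X_def by simp
    then have "forward_diff r (\<lambda>l. E n (a + l))
        = \<delta> n ^ R * forward_diff r (X n) + forward_diff r (\<lambda>l. poly (q n) (\<delta> n * real (a + l)))"
      by (simp only: forward_diff_add forward_diff_cmult)
    moreover have "\<delta> n ^ R = \<delta> n ^ r * \<delta> n ^ (R - r)"
      using \<open>a + r \<le> R\<close> by (simp flip: power_add)
    ultimately show ?thesis
      using \<delta>_pos[of n] by (simp add: field_simps)
  qed
  have "(\<lambda>n. forward_diff r (X n)) \<longlonglongrightarrow> forward_diff r (\<lambda>_. 0)"
    unfolding forward_diff_def X_def using \<open>a + r \<le> R\<close>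
    by (intro tendsto_sum tendsto_mult tendsto_const approx) auto
  then have "(\<lambda>n. forward_diff r (X n) * \<delta> n ^ (R - r)) \<longlonglongrightarrow> 0 * 0 ^ (R - r)"
    by (intro tendsto_mult tendsto_power \<delta>_0) (simp add: forward_diff_def)
  then have "(\<lambda>n. forward_diff r (X n) * \<delta> n ^ (R - r)) \<longlonglongrightarrow> 0"
    by simp
  from tendsto_add[OF this tendsto_forward_diff_poly_rescaled[OF \<delta>_pos \<delta>_0 q deg \<open>r \<le> N\<close>]]
  show ?thesis
    unfolding split by simp
qed

section \<open>Log-polynomial sequences\<close>

lemma tendsto_quadratic_plus_small_div:
  fixes g :: "nat \<Rightarrow> nat \<Rightarrow> real" and \<delta> :: "nat \<Rightarrow> real"
  assumes \<delta>_pos: "\<And>n. \<delta> n > 0" and \<delta>_0: "\<delta> \<longlonglongrightarrow> 0"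
    and g_small: "\<And>k. k \<in> {3..m} \<Longrightarrow> g k \<in> o(\<lambda>n. \<delta> n ^ k)"
  shows "(\<lambda>n. (\<kappa> * \<delta> n ^ 2 * x ^ 2 + (\<Sum>k=3..m. g k n * x ^ k)) / \<delta> n) \<longlonglongrightarrow> 0"
proof -
  have "g k n * x ^ k / \<delta> n = g k n / \<delta> n ^ k * \<delta> n ^ (k - 1) * x ^ k" if "k \<in> {3..m}" for k n
  proof -
    have "\<delta> n ^ k = \<delta> n * \<delta> n ^ (k - 1)"
      using that by (cases k) auto
    then show ?thesis
      using \<delta>_pos[of n] by (simp add: field_simps)
  qed
  then have "(\<kappa> * \<delta> n ^ 2 * x ^ 2 + (\<Sum>k=3..m. g k n * x ^ k)) / \<delta> n
      = \<kappa> * \<delta> n * x ^ 2 + (\<Sum>k=3..m. g k n / \<delta> n ^ k * \<delta> n ^ (k - 1) * x ^ k)" for n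
    using \<delta>_pos[of n] by (simp add: add_divide_distrib sum_divide_distrib power2_eq_square)
  moreover have "(\<lambda>n. \<kappa> * \<delta> n * x ^ 2 + (\<Sum>k=3..m. g k n / \<delta> n ^ k * \<delta> n ^ (k - 1) * x ^ k))
      \<longlonglongrightarrow> \<kappa> * 0 * x ^ 2 + (\<Sum>k=3..m. 0 * 0 ^ (k - 1) * x ^ k)"
    using smalloD_tendsto[OF g_small] \<delta>_0 by (intro tendsto_intros) auto
  ultimately show ?thesis
    by simp
qed

lemma rescaled_poly_approx:
  fixes g :: "nat \<Rightarrow> nat \<Rightarrow> real" and \<delta> :: "nat \<Rightarrow> real"
  assumes \<delta>_pos: "\<And>n. \<delta> n > 0" and \<delta>_0: "\<delta> \<longlonglongrightarrow> 0" and "m \<ge> 2"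
    and g_small: "\<And>k. k \<in> {3..m} \<Longrightarrow> g k \<in> o(\<lambda>n. \<delta> n ^ k)"
  obtains p :: "nat \<Rightarrow> real poly" where
    "poly_coeff_tendsto p [:0, 0, \<kappa>:]" and "\<And>n. degree (p n) \<le> m"
    and "\<And>n x. poly (p n) (\<delta> n * x) = \<kappa> * \<delta> n ^ 2 * x ^ 2 + (\<Sum>k=3..m. g k n * x ^ k)"
    and "\<And>x. (\<lambda>n. poly (p n) (\<delta> n * x) / \<delta> n) \<longlonglongrightarrow> 0"
proof -
  define h where "h k n = g k n / \<delta> n ^ k" for k n
  have h_0: "h k \<longlonglongrightarrow> 0" if "k \<in> {3..m}" for k
    unfolding h_def using g_small[OF that] by (rule smalloD_tendsto)
  define p where "p n = [:0, 0, \<kappa>:] + (\<Sum>k=3..m. monom (h k n) k)" for n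
  have "poly_coeff_tendsto (\<lambda>n. monom (h k n) k) 0" if "k \<in> {3..m}" for k
  proof -
    have "(\<lambda>n. if k = i then h k n else 0) \<longlonglongrightarrow> 0" for i
      using h_0[OF that] by (cases "k = i") simp_all
    then show ?thesis
      unfolding poly_coeff_tendsto_def coeff_monom by simp
  qed
  then have "poly_coeff_tendsto p ([:0, 0, \<kappa>:] + (\<Sum>k=3..m. 0))"
    unfolding p_def by (intro poly_coeff_tendsto_add poly_coeff_tendsto_const poly_coeff_tendsto_sum)
  then have "poly_coeff_tendsto p [:0, 0, \<kappa>:]"
    by simp
  moreover have "degree (p n) \<le> m" for n
    unfolding p_def using \<open>m \<ge> 2\<close>
    by (intro degree_add_le degree_sum_le) (auto intro: order.trans[OF degree_monom_le])
  moreover have poly_p: "poly (p n) (\<delta> n * x) = \<kappa> * \<delta> n ^ 2 * x ^ 2 + (\<Sum>k=3..m. g k n * x ^ k)"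
    for n x
  proof -
    have "h k n * (\<delta> n * x) ^ k = g k n * x ^ k" for k
      unfolding h_def using \<delta>_pos[of n] by (simp add: power_mult_distrib)
    then show ?thesis
      unfolding p_def by (simp add: poly_sum poly_monom power2_eq_square mult_ac)
  qed
  moreover have "(\<lambda>n. poly (p n) (\<delta> n * x) / \<delta> n) \<longlonglongrightarrow> 0" for x
    unfolding poly_p using \<delta>_pos \<delta>_0 g_small by (rule tendsto_quadratic_plus_small_div)
  ultimately show ?thesis
    using that by blast
qed

lemma log_polynomial_ln_poly_approx:
  fixes \<alpha> A \<delta> :: "nat \<Rightarrow> real"
  assumes LP: "log_polynomial \<alpha> m A \<kappa> \<delta>"
  obtains p :: "nat \<Rightarrow> real poly" where
    "poly_coeff_tendsto p [:0, 0, \<kappa>:]" and "\<And>n. degree (p n) \<le> m"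
    and "\<And>j. (\<lambda>n. poly (p n) (\<delta> n * real j) / \<delta> n) \<longlonglongrightarrow> 0"
    and "\<And>j. j \<le> m + 1 \<Longrightarrow>
      (\<lambda>n. (ln (normalized_shift \<alpha> A n j) - poly (p n) (\<delta> n * real j)) / \<delta> n ^ (m + 1)) \<longlonglongrightarrow> 0"
proof -
  from LP have "m \<ge> 2" and \<alpha>_pos: "\<And>n. \<alpha> n > 0" and \<delta>_pos: "\<And>n. \<delta> n > 0"
    and \<delta>_0: "\<delta> \<longlonglongrightarrow> 0"
    unfolding log_polynomial_def by auto
  from LP obtain g :: "nat \<Rightarrow> nat \<Rightarrow> real" where
    g_small: "\<And>k. k \<in> {3..m} \<Longrightarrow> g k \<in> o(\<lambda>n. \<delta> n ^ k)" and
    ln_approx: "\<And>j. j \<in> {1..m+1} \<Longrightarrow> (\<lambda>n. ln (\<alpha> (n + j) / \<alpha> n)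
       - (A n * real j + \<kappa> * \<delta> n ^ 2 * real j ^ 2 + (\<Sum>k=3..m. g k n * real j ^ k)))
       \<in> o(\<lambda>n. \<delta> n ^ (m + 1))"
    unfolding log_polynomial_def by blast
  obtain p :: "nat \<Rightarrow> real poly" where "poly_coeff_tendsto p [:0, 0, \<kappa>:]" "\<And>n. degree (p n) \<le> m"
    and poly_p: "\<And>n x. poly (p n) (\<delta> n * x) = \<kappa> * \<delta> n ^ 2 * x ^ 2 + (\<Sum>k=3..m. g k n * x ^ k)"
    and "\<And>x. (\<lambda>n. poly (p n) (\<delta> n * x) / \<delta> n) \<longlonglongrightarrow> 0"
    using rescaled_poly_approx[OF \<delta>_pos \<delta>_0 \<open>m \<ge> 2\<close> g_small] by blast
  moreover have "(\<lambda>n. (ln (normalized_shift \<alpha> A n j) - poly (p n) (\<delta> n * real j)) / \<delta> n ^ (m + 1))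
      \<longlonglongrightarrow> 0" if "j \<le> m + 1" for j
  proof (cases "j = 0")
    case True
    have "(\<Sum>k=3..m. g k n * 0 ^ k) = 0" for n
      by (intro sum.neutral) auto
    moreover have "\<alpha> n \<noteq> 0" for n
      using \<alpha>_pos[of n] by simp
    ultimately show ?thesis
      using True poly_p[of _ 0] unfolding normalized_shift_def by simp
  next
    case False
    have "ln (normalized_shift \<alpha> A n j) - poly (p n) (\<delta> n * real j) = ln (\<alpha> (n + j) / \<alpha> n)
        - (A n * real j + \<kappa> * \<delta> n ^ 2 * real j ^ 2 + (\<Sum>k=3..m. g k n * real j ^ k))" for n
      unfolding normalized_shift_def poly_p using \<alpha>_pos[of n] \<alpha>_pos[of "n + j"]
      by (simp add: ln_div ln_mult)
    moreover have "j \<in> {1..m+1}"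
      using False that by auto
    ultimately show ?thesis
      using smalloD_tendsto[OF ln_approx] by simp
  qed
  ultimately show ?thesis
    using that by blast
qed

lemma tendsto_forward_diff_normalized_shift:
  fixes \<alpha> A \<delta> :: "nat \<Rightarrow> real"
  assumes LP: "log_polynomial \<alpha> m A \<kappa> \<delta>" and "a + r \<le> m + 1"
  shows "(\<lambda>n. forward_diff r (\<lambda>l. normalized_shift \<alpha> A n (a + l)) / \<delta> n ^ r)
           \<longlonglongrightarrow> fact r * exp_sq_coeff \<kappa> r"
proof -
  from LP have "m \<ge> 2" and \<alpha>_pos: "\<And>n. \<alpha> n > 0" and \<delta>_pos: "\<And>n. \<delta> n > 0"
    and \<delta>_0: "\<delta> \<longlonglongrightarrow> 0"
    unfolding log_polynomial_def by auto
  obtain p :: "nat \<Rightarrow> real poly" where p_lim: "poly_coeff_tendsto p [:0, 0, \<kappa>:]"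
    and deg_p: "\<And>n. degree (p n) \<le> m"
    and p_small: "\<And>j. (\<lambda>n. poly (p n) (\<delta> n * real j) / \<delta> n) \<longlonglongrightarrow> 0"
    and ln_approx: "\<And>j. j \<le> m + 1 \<Longrightarrow>
      (\<lambda>n. (ln (normalized_shift \<alpha> A n j) - poly (p n) (\<delta> n * real j)) / \<delta> n ^ (m + 1)) \<longlonglongrightarrow> 0"
    using log_polynomial_ln_poly_approx[OF LP] by blast
  define q where "q n = exp_taylor_poly (m + 2) (p n)" for n
  have q_lim: "poly_coeff_tendsto q (exp_taylor_poly (m + 2) [:0, 0, \<kappa>:])"
    unfolding q_def by (rule poly_coeff_tendsto_exp_taylor_poly[OF p_lim])
  have deg_q: "degree (q n) \<le> m * (m + 2)" for n
    unfolding q_def by (rule degree_exp_taylor_poly[OF deg_p])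
  have approx: "(\<lambda>n. (normalized_shift \<alpha> A n j - poly (q n) (\<delta> n * real j)) / \<delta> n ^ (m + 1))
      \<longlonglongrightarrow> 0" if "j \<le> m + 1" for j
  proof -
    have "normalized_shift \<alpha> A n j > 0" for n
      unfolding normalized_shift_def using \<alpha>_pos by simp
    then show ?thesis
      unfolding q_def poly_exp_taylor_poly using ln_approx[OF that]
      by (intro tendsto_taylor_approx_of_ln_approx \<delta>_pos \<delta>_0 p_small) simp_all
  qed
  have "(\<lambda>n. forward_diff r (\<lambda>l. normalized_shift \<alpha> A n (a + l)) / \<delta> n ^ r)
      \<longlonglongrightarrow> fact r * coeff (exp_taylor_poly (m + 2) [:0, 0, \<kappa>:]) r"
    by (rule tendsto_forward_diff_of_poly_approx[OF \<delta>_pos \<delta>_0 q_lim deg_q _ _ approx])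
       (use \<open>a + r \<le> m + 1\<close> \<open>m \<ge> 2\<close> in auto)
  also have "coeff (exp_taylor_poly (m + 2) [:0, 0, \<kappa>:]) r = exp_sq_coeff \<kappa> r"
    using \<open>a + r \<le> m + 1\<close> by (intro coeff_exp_taylor_poly_sq) simp
  finally show ?thesis .
qed

section \<open>Hermite-Jensen limits\<close>

lemma tendsto_coeff_normalized_jensenJ:
  fixes \<alpha> A \<delta> :: "nat \<Rightarrow> real"
  assumes LP: "log_polynomial \<alpha> m A \<kappa> \<delta>" and "d \<le> m + 1"
  shows "(\<lambda>n. coeff (smult (inverse (\<delta> n ^ d)) (smult (inverse (\<alpha> n))
             (pcompose (jensenJ \<alpha> d n) [:- 1 / exp (A n), \<delta> n / exp (A n):]))) i)
           \<longlonglongrightarrow> hermite_target_coeff \<kappa> d i"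
proof -
  from LP have "\<And>n. \<alpha> n > 0" and "\<And>n. \<delta> n > 0"
    unfolding log_polynomial_def by auto
  then have coeff_eq: "coeff (smult (inverse (\<delta> n ^ d)) (smult (inverse (\<alpha> n))
             (pcompose (jensenJ \<alpha> d n) [:- 1 / exp (A n), \<delta> n / exp (A n):]))) i
      = (if i \<le> d then real (d choose i) * (-1) ^ (d - i) *
          (forward_diff (d - i) (\<lambda>l. normalized_shift \<alpha> A n (i + l)) / \<delta> n ^ (d - i)) else 0)" for n
    by (rule coeff_normalized_jensenJ)
  show ?thesis
  proof (cases "i \<le> d")
    case True
    have "(\<lambda>n. real (d choose i) * (-1) ^ (d - i) *
          (forward_diff (d - i) (\<lambda>l. normalized_shift \<alpha> A n (i + l)) / \<delta> n ^ (d - i)))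
        \<longlonglongrightarrow> real (d choose i) * (-1) ^ (d - i) * (fact (d - i) * exp_sq_coeff \<kappa> (d - i))"
      using True \<open>d \<le> m + 1\<close> by (intro tendsto_mult_left tendsto_forward_diff_normalized_shift[OF LP]) auto
    also have "real (d choose i) * (-1) ^ (d - i) * (fact (d - i) * exp_sq_coeff \<kappa> (d - i))
        = hermite_target_coeff \<kappa> d i"
      \<comment> \<open>the sign is harmless since exp (\<kappa> X^2) has no odd-degree terms\<close>
      using True unfolding hermite_target_coeff_def exp_sq_coeff_def by simp
    finally show ?thesis
      using True unfolding coeff_eq by simp
  qed (unfold coeff_eq, simp add: hermite_target_coeff_def)
qed

lemma tendsto_coeff_normalized_jensenK:
  fixes \<alpha> A \<delta> :: "nat \<Rightarrow> real"
  assumes LP: "log_polynomial \<alpha> m A \<kappa> \<delta>" and "d \<le> m + 1"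
  shows "(\<lambda>n. coeff (smult (inverse ((exp (A n) * \<delta> n) ^ d)) (smult (inverse (\<alpha> n))
             (pcompose (jensenK \<alpha> d n) [:- exp (A n), exp (A n) * \<delta> n:]))) i)
           \<longlonglongrightarrow> hermite_target_coeff \<kappa> d i"
proof -
  from LP have "\<And>n. \<alpha> n > 0" and "\<And>n. \<delta> n > 0"
    unfolding log_polynomial_def by auto
  then have coeff_eq: "coeff (smult (inverse ((exp (A n) * \<delta> n) ^ d)) (smult (inverse (\<alpha> n))
             (pcompose (jensenK \<alpha> d n) [:- exp (A n), exp (A n) * \<delta> n:]))) i
      = (if i \<le> d then real (d choose i) *
          (forward_diff (d - i) (normalized_shift \<alpha> A n) / \<delta> n ^ (d - i)) else 0)" for n
    by (rule coeff_normalized_jensenK)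
  show ?thesis
  proof (cases "i \<le> d")
    case True
    have "(\<lambda>n. real (d choose i) *
          (forward_diff (d - i) (\<lambda>l. normalized_shift \<alpha> A n (0 + l)) / \<delta> n ^ (d - i)))
        \<longlonglongrightarrow> real (d choose i) * (fact (d - i) * exp_sq_coeff \<kappa> (d - i))"
      using True \<open>d \<le> m + 1\<close> by (intro tendsto_mult_left tendsto_forward_diff_normalized_shift[OF LP]) auto
    then show ?thesis
      using True unfolding coeff_eq hermite_target_coeff_def by (simp add: mult.assoc)
  qed (unfold coeff_eq, simp add: hermite_target_coeff_def)
qed

theorem theorem1p6:
  fixes \<alpha> A \<delta> :: "nat \<Rightarrow> real" and \<kappa> :: real and m d :: nat
  assumes "log_polynomial \<alpha> m A \<kappa> \<delta>"
    and "1 \<le> d" and "d \<le> m + 1"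
  shows "hermite_jensen \<alpha> d A \<kappa> \<delta>"
proof -
  from assms(1) have \<kappa>: "\<kappa> = 1 \<or> \<kappa> = -1" and "\<forall>n. \<alpha> n > 0" and "\<forall>n. \<delta> n > 0"
    unfolding log_polynomial_def by auto
  have coeff_of_real: "coeff (map_poly complex_of_real p) i = complex_of_real (coeff p i)" for p i
    by (simp add: coeff_map_poly)
  show ?thesis
    unfolding hermite_jensen_def poly_coeff_tendsto_def coeff_hermite_target[OF \<kappa>] coeff_of_real
    using assms(2) \<kappa> \<open>\<forall>n. \<alpha> n > 0\<close> \<open>\<forall>n. \<delta> n > 0\<close>
      tendsto_of_real[OF tendsto_coeff_normalized_jensenJ[OF assms(1,3)]]
      tendsto_of_real[OF tendsto_coeff_normalized_jensenK[OF assms(1,3)]]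
    by blast
qed

end
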